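(* Consider a football league with $n\ge 2$ teams in which every pair of distinct teams $i\neq j$ plays twice, once at the home ground of each team; let $X_{ij1}$ (resp. $X_{ij0}$) be the number of goals scored by team $i$ against team $j$ in the match at $i$'s (resp. $j$'s) home ground. Suppose every win, draw and loss is awarded $3$, $1$ and $0$ points respectively, and that the $X_{ijk}$, $i\neq j$, $k\in\{0,1\}$, are independent and each follows a Poisson distribution with the same mean $\lambda>0$. Then the league is perfectly balanced.
   Context: The match between team $i$ at home and team $j$ is a win/draw/loss for $i$ according as $X_{ij1}>,=,<X_{ji0}$. For each team $i$, $S_i$ is its total points over all its matches, $GS_i=\sum_{j\neq i}\sum_{k\in\{0,1\}}X_{ijk}$ its total goals scored, $GC_i=\sum_{j\neq i}\sum_{k\in\{0,1\}}X_{jik}$ its total goals conceded, and $GD_i=GS_i-GC_i$ its goal difference. The final standing (an ordering of the $n$ teams) is determined first by $S_i$, then by $GD_i$, then by $GS_i$, with any further ties broken by criteria (such as head-to-head points) that treat the teams symmetrically. A league is called perfectly balanced if every permutation of the teams is equally likely to be the final standing. *)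

theory Defs
  imports "HOL-Probability.Probability" "HOL-Combinatorics.Permutations"
begin

text \<open>Teams are 0,...,n-1. A match outcome is a function
  x :: nat \<times> nat \<times> bool \<Rightarrow> nat where x (i,j,True) = X_ij1 (goals of i
  against j at i's home) and x (i,j,False) = X_ij0 (goals of i against j at j's home).\<close>

definition match_index :: "nat \<Rightarrow> (nat \<times> nat \<times> bool) set" where
  "match_index n = {(i,j,k). i < n \<and> j < n \<and> i \<noteq> j}"

definition valid_outcome :: "nat \<Rightarrow> (nat \<times> nat \<times> bool \<Rightarrow> nat) \<Rightarrow> bool" where
  "valid_outcome n x \<longleftrightarrow> (\<forall>t. t \<notin> match_index n \<longrightarrow> x t = 0)"

definition match_points :: "nat \<Rightarrow> nat \<Rightarrow> nat" where
  "match_points a b = (if a > b then 3 else if a = b then 1 else 0)"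

definition points :: "nat \<Rightarrow> (nat \<times> nat \<times> bool \<Rightarrow> nat) \<Rightarrow> nat \<Rightarrow> nat" where
  "points n x i = (\<Sum>j\<in>{..<n} - {i}.
      match_points (x (i,j,True)) (x (j,i,False)) + match_points (x (i,j,False)) (x (j,i,True)))"

definition goals_scored :: "nat \<Rightarrow> (nat \<times> nat \<times> bool \<Rightarrow> nat) \<Rightarrow> nat \<Rightarrow> nat" where
  "goals_scored n x i = (\<Sum>j\<in>{..<n} - {i}. \<Sum>k\<in>(UNIV::bool set). x (i,j,k))"

definition goals_conceded :: "nat \<Rightarrow> (nat \<times> nat \<times> bool \<Rightarrow> nat) \<Rightarrow> nat \<Rightarrow> nat" where
  "goals_conceded n x i = (\<Sum>j\<in>{..<n} - {i}. \<Sum>k\<in>(UNIV::bool set). x (j,i,k))"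

definition goal_difference :: "nat \<Rightarrow> (nat \<times> nat \<times> bool \<Rightarrow> nat) \<Rightarrow> nat \<Rightarrow> int" where
  "goal_difference n x i = int (goals_scored n x i) - int (goals_conceded n x i)"

definition ahead :: "nat \<Rightarrow> (nat \<times> nat \<times> bool \<Rightarrow> nat) \<Rightarrow> nat \<Rightarrow> nat \<Rightarrow> bool" where
  "ahead n x i j \<longleftrightarrow>
     points n x i > points n x j \<or>
     (points n x i = points n x j \<and>
       (goal_difference n x i > goal_difference n x j \<or>
        (goal_difference n x i = goal_difference n x j \<and> goals_scored n x i > goals_scored n x j)))"

definition relabel :: "(nat \<Rightarrow> nat) \<Rightarrow> (nat \<times> nat \<times> bool \<Rightarrow> nat) \<Rightarrow> (nat \<times> nat \<times> bool \<Rightarrow> nat)" where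
  "relabel \<sigma> x = (\<lambda>(i,j,k). x (\<sigma> i, \<sigma> j, k))"

text \<open>A standing is a permutation p of {..<n}: p i is the final position of team i
  (position 0 = top). A standing rule assigns to each outcome a (possibly random, e.g. lots)
  standing; it must respect points, goal difference, goals scored, and treat teams
  symmetrically (equivariance under relabelling).\<close>
definition admissible_standing_rule ::
  "nat \<Rightarrow> ((nat \<times> nat \<times> bool \<Rightarrow> nat) \<Rightarrow> (nat \<Rightarrow> nat) pmf) \<Rightarrow> bool" where
  "admissible_standing_rule n R \<longleftrightarrow>
     (\<forall>x. valid_outcome n x \<longrightarrow>
        (\<forall>p\<in>set_pmf (R x). p permutes {..<n} \<and>
            (\<forall>i<n. \<forall>j<n. ahead n x i j \<longrightarrow> p i < p j)) \<and>
        (\<forall>\<sigma>. \<sigma> permutes {..<n} \<longrightarrow> R (relabel \<sigma> x) = map_pmf (\<lambda>p. p \<circ> \<sigma>) (R x)))"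

definition goals_distribution :: "nat \<Rightarrow> real \<Rightarrow> (nat \<times> nat \<times> bool \<Rightarrow> nat) pmf" where
  "goals_distribution n lam = Pi_pmf (match_index n) 0 (\<lambda>_. poisson_pmf lam)"

definition final_standing :: "nat \<Rightarrow> real \<Rightarrow> ((nat \<times> nat \<times> bool \<Rightarrow> nat) \<Rightarrow> (nat \<Rightarrow> nat) pmf)
    \<Rightarrow> (nat \<Rightarrow> nat) pmf" where
  "final_standing n lam R = bind_pmf (goals_distribution n lam) R"

definition perfectly_balanced :: "nat \<Rightarrow> real \<Rightarrow> ((nat \<times> nat \<times> bool \<Rightarrow> nat) \<Rightarrow> (nat \<Rightarrow> nat) pmf) \<Rightarrow> bool" where
  "perfectly_balanced n lam R \<longleftrightarrow>
     (\<forall>p q. p permutes {..<n} \<longrightarrow> q permutes {..<n} \<longrightarrow>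
        pmf (final_standing n lam R) p = pmf (final_standing n lam R) q)"

end

theory Submission
  imports Defs
begin

text \<open>Relabelling the teams only permutes the independent, identically distributed scores
  (home and away matches keep their roles), so it leaves the joint law of the scores unchanged;
  an admissible standing rule commutes with relabelling. Hence the law of the final standing is
  invariant under \<open>p \<mapsto> p \<circ> \<sigma>\<close> for every permutation \<open>\<sigma>\<close> of the teams, and these maps act
  transitively on the standings. Only this symmetry is used: neither \<open>n \<ge> 2\<close>, \<open>\<lambda> > 0\<close>, the
  Poisson shape nor the ranking criteria play a role.\<close>

lemma map_bind_pmf_equivariant:
  assumes "map_pmf f M = M"
    and "\<And>x. x \<in> set_pmf M \<Longrightarrow> R (f x) = map_pmf g (R x)"
  shows "map_pmf g (bind_pmf M R) = bind_pmf M R"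
proof -
  have "map_pmf g (bind_pmf M R) = bind_pmf M (\<lambda>x. map_pmf g (R x))"
    by (simp add: map_bind_pmf)
  also have "\<dots> = bind_pmf M (\<lambda>x. R (f x))"
    using assms(2) by (intro bind_pmf_cong) simp_all
  also have "\<dots> = bind_pmf (map_pmf f M) R"
    by (simp add: bind_map_pmf)
  finally show ?thesis
    using assms(1) by simp
qed

lemma pmf_eq_if_map_pmf_invariant:
  assumes "map_pmf g M = M" and "inj g"
  shows "pmf M (g x) = pmf M x"
  by (metis assms pmf_map_inj')

lemma inj_comp_right_permutes:
  assumes "\<sigma> permutes S"
  shows "inj (\<lambda>r. r \<circ> \<sigma>)"
proof (rule injI)
  fix r s :: "'a \<Rightarrow> 'b"
  assume "r \<circ> \<sigma> = s \<circ> \<sigma>"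
  then have "r \<circ> \<sigma> \<circ> inv \<sigma> = s \<circ> \<sigma> \<circ> inv \<sigma>"
    by simp
  then show "r = s"
    by (simp add: o_assoc [symmetric] permutes_inv_o(1) [OF assms])
qed

definition relabel_index :: "(nat \<Rightarrow> nat) \<Rightarrow> nat \<times> nat \<times> bool \<Rightarrow> nat \<times> nat \<times> bool" where
  "relabel_index \<sigma> = (\<lambda>(i, j, k). (\<sigma> i, \<sigma> j, k))"

lemma relabel_eq_comp: "relabel \<sigma> x = x \<circ> relabel_index \<sigma>"
  by (auto simp: relabel_def relabel_index_def fun_eq_iff)

lemma finite_match_index: "finite (match_index n)"
proof (rule finite_subset)
  show "match_index n \<subseteq> {..<n} \<times> {..<n} \<times> (UNIV :: bool set)"
    by (auto simp: match_index_def)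
qed simp

lemma relabel_index_in_match_index_iff:
  assumes "\<sigma> permutes {..<n}"
  shows "relabel_index \<sigma> t \<in> match_index n \<longleftrightarrow> t \<in> match_index n"
proof -
  have "\<sigma> i < n \<longleftrightarrow> i < n" for i
    using assms by (metis lessThan_iff permutes_in_image)
  moreover have "\<sigma> i = \<sigma> j \<longleftrightarrow> i = j" for i j
    using permutes_inj [OF assms] by (simp add: inj_eq)
  ultimately show ?thesis
    by (cases t) (simp add: relabel_index_def match_index_def)
qed

lemma bij_betw_relabel_index:
  assumes "\<sigma> permutes {..<n}"
  shows "bij_betw (relabel_index \<sigma>) (match_index n) (match_index n)"
proof (rule bij_betwI [where g = "relabel_index (inv \<sigma>)"])
  have inv: "inv \<sigma> permutes {..<n}"
    using assms by (rule permutes_inv)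
  show "relabel_index \<sigma> \<in> match_index n \<rightarrow> match_index n"
    using relabel_index_in_match_index_iff [OF assms] by blast
  show "relabel_index (inv \<sigma>) \<in> match_index n \<rightarrow> match_index n"
    using relabel_index_in_match_index_iff [OF inv] by blast
qed (auto simp: relabel_index_def permutes_inverses [OF assms])

lemma goals_distribution_relabel:
  assumes "\<sigma> permutes {..<n}"
  shows "map_pmf (relabel \<sigma>) (goals_distribution n lam) = goals_distribution n lam"
  using Pi_pmf_bij_betw [OF finite_match_index bij_betw_relabel_index [OF assms],
      of 0 "poisson_pmf lam"] relabel_index_in_match_index_iff [OF assms]
  by (simp add: goals_distribution_def relabel_eq_comp [abs_def])

lemma valid_outcome_if_in_goals_distribution:
  assumes "x \<in> set_pmf (goals_distribution n lam)"
  shows "valid_outcome n x"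
  using set_Pi_pmf_subset [OF finite_match_index] assms
  by (fastforce simp: goals_distribution_def valid_outcome_def)

lemma final_standing_relabel_invariant:
  assumes "admissible_standing_rule n R" and "\<sigma> permutes {..<n}"
  shows "map_pmf (\<lambda>p. p \<circ> \<sigma>) (final_standing n lam R) = final_standing n lam R"
  unfolding final_standing_def
proof (rule map_bind_pmf_equivariant)
  show "map_pmf (relabel \<sigma>) (goals_distribution n lam) = goals_distribution n lam"
    using assms(2) by (rule goals_distribution_relabel)
  show "R (relabel \<sigma> x) = map_pmf (\<lambda>p. p \<circ> \<sigma>) (R x)"
    if "x \<in> set_pmf (goals_distribution n lam)" for x
    using assms valid_outcome_if_in_goals_distribution [OF that]
    by (simp add: admissible_standing_rule_def)
qed

theorem theorem2:
  fixes n :: nat and lam :: real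
    and R :: "(nat \<times> nat \<times> bool \<Rightarrow> nat) \<Rightarrow> (nat \<Rightarrow> nat) pmf"
  assumes "n \<ge> 2" and "lam > 0"
    and "admissible_standing_rule n R"
  shows "perfectly_balanced n lam R"
  unfolding perfectly_balanced_def
proof (intro allI impI)
  fix p q
  assume p: "p permutes {..<n}" and q: "q permutes {..<n}"
  obtain \<sigma> where \<sigma>: "\<sigma> permutes {..<n}" and "q = p \<circ> \<sigma>"
    using image_compose_permutations_left [OF p] q by blast
  then show "pmf (final_standing n lam R) p = pmf (final_standing n lam R) q"
    using pmf_eq_if_map_pmf_invariant [OF final_standing_relabel_invariant [OF assms(3) \<sigma>]
        inj_comp_right_permutes [OF \<sigma>]]
    by simp
qed

end
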